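(* Let $P$ be a (generic) twisted $J$-corrugated $n$-gon and let $\mathcal D\in\mathrm{DO}_n(J)$ be a difference operator corresponding to it. Then the eigenvalues of the monodromy of $P$ coincide with the roots of the polynomial $\det\mathcal D(z)$ (both being defined up to simultaneous multiplication by a common nonzero constant).
   Context: A scalar operator is a bi-infinite real sequence $a=(a_i)$ acting by $(aV)_i=a_iV_i$; $T$ is the left shift $(TV)_i=V_{i+1}$. An $n$-periodic difference operator is a finite sum $\sum_j a^{(j)}T^j$ with $n$-periodic scalar coefficients; $\mathrm{DO}_n(J)$ denotes those of the form $\sum_{j\in J}a^{(j)}T^j$. For $\mathcal D$ $n$-periodic, $\mathcal D(z)\in\mathfrak{gl}_n\otimes\mathbb R[z,z^{-1}]$ is its image under the algebra isomorphism sending a scalar operator $a$ to $\mathrm{diag}(a_1,\dots,a_n)$ and $T$ to the matrix with $1$'s in positions $(i,i+1)$ and $z$ in position $(n,1)$. A twisted $n$-gon is a sequence $v_i\in\mathbb{RP}^d$ with $v_{i+n}=M(v_i)$, $M$ a fixed projective transformation (the monodromy). For $d=\max J-\min J-1$, the polygon is $J$-corrugated if for every $i$ the points $v_{i+j}$, $j\in J$, lie in a projective subspace of dimension $|J|-2$. $\mathcal D$ corresponds to the polygon if $\mathcal DV=0$ for some lift $V_i\in\mathbb R^{d+1}\setminus\{0\}$ of $v_i$. *)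

theory Defs
  imports "Jordan_Normal_Form.Char_Poly" "Jordan_Normal_Form.Determinant"
begin

text \<open>A scalar coefficient sequence is a function int => real; a difference operator
  in DO_n(J) is given by its coefficients a j (for j in J), where a j i is the
  i-th entry of the scalar operator a^(j).  A lift of a polygon in RP^d is a
  sequence V :: int => real vec of nonzero vectors of dimension d+1.\<close>

definition periodic_seq :: "nat \<Rightarrow> (int \<Rightarrow> 'a) \<Rightarrow> bool" where
  "periodic_seq n a \<longleftrightarrow> (\<forall>i. a (i + int n) = a i)"

text \<open>d + 1 = max J - min J, i.e. the dimension of the lifts.\<close>
definition lift_dim :: "int set \<Rightarrow> nat" where
  "lift_dim J = nat (Max J - Min J)"

definition annihilates :: "int set \<Rightarrow> (int \<Rightarrow> int \<Rightarrow> real) \<Rightarrow> nat \<Rightarrow> (int \<Rightarrow> real vec) \<Rightarrow> bool" where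
  "annihilates J a dd V \<longleftrightarrow> (\<forall>i. \<forall>k<dd. (\<Sum>j\<in>J. a j i * (V (i + j) $ k)) = 0)"

text \<open>Twisted n-gon with monodromy (lifted to the invertible matrix M):
  v_{i+n} = M(v_i) in projective space, i.e. V_{i+n} is a nonzero multiple of M V_i.\<close>
definition twisted_monodromy :: "nat \<Rightarrow> (int \<Rightarrow> real vec) \<Rightarrow> real mat \<Rightarrow> bool" where
  "twisted_monodromy n V M \<longleftrightarrow> (\<forall>i. \<exists>\<mu>. \<mu> \<noteq> 0 \<and> V (i + int n) = \<mu> \<cdot>\<^sub>v (M *\<^sub>v V i))"

text \<open>J-corrugated: for every i the points v_{i+j}, j in J, lie in a projective subspace
  of dimension |J|-2, i.e. the family of lifts (V_{i+j})_{j in J} is linearly dependent.\<close>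
definition corrugated :: "int set \<Rightarrow> nat \<Rightarrow> (int \<Rightarrow> real vec) \<Rightarrow> bool" where
  "corrugated J dd V \<longleftrightarrow> (\<forall>i. \<exists>c :: int \<Rightarrow> real. (\<exists>j\<in>J. c j \<noteq> 0) \<and>
      (\<forall>k<dd. (\<Sum>j\<in>J. c j * (V (i + j) $ k)) = 0))"

text \<open>The matrix D(z) (rows/columns 1..n stored at JNF indices 0..n-1).  The entry (i,k)
  of T^j is z^((i+j-1) div n) if (i+j-1) mod n + 1 = k and 0 otherwise.  Since D(z) is a
  Laurent polynomial matrix we multiply every entry by z^s with s = nat (- (Min J div n)),
  which makes all entries polynomials; hence the polynomial below equals
  z^(n*s) * det D(z), with the same nonzero roots (and multiplicities) as det D(z).\<close>
definition DO_shift :: "int set \<Rightarrow> nat \<Rightarrow> nat" where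
  "DO_shift J n = nat (- (Min J div int n))"

definition DO_matrix_shifted :: "int set \<Rightarrow> (int \<Rightarrow> int \<Rightarrow> real) \<Rightarrow> nat \<Rightarrow> complex poly mat" where
  "DO_matrix_shifted J a n = mat n n (\<lambda>(r, c).
     (let i = int r + 1; k = int c + 1 in
       \<Sum>j\<in>{j\<in>J. (i + j - 1) mod int n + 1 = k}.
          monom (complex_of_real (a j i)) (nat ((i + j - 1) div int n + int (DO_shift J n)))))"

definition det_DO_poly :: "int set \<Rightarrow> (int \<Rightarrow> int \<Rightarrow> real) \<Rightarrow> nat \<Rightarrow> complex poly" where
  "det_DO_poly J a n = det (DO_matrix_shifted J a n)"

text \<open>Multiset of nonzero roots of det D(z) (roots of a Laurent polynomial are nonzero).\<close>
definition roots_det_DO :: "int set \<Rightarrow> (int \<Rightarrow> int \<Rightarrow> real) \<Rightarrow> nat \<Rightarrow> complex multiset" where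
  "roots_det_DO J a n = filter_mset (\<lambda>z. z \<noteq> 0) (proots (det_DO_poly J a n))"

definition eigenvalues_mset :: "real mat \<Rightarrow> complex multiset" where
  "eigenvalues_mset M = proots (char_poly (map_mat complex_of_real M))"

end

theory Submission
  imports Defs "Jordan_Normal_Form.Jordan_Normal_Form_Existence"
begin

text \<open>Since the extreme coefficients \<open>a (Min J)\<close> and \<open>a (Max J)\<close> never vanish, a solution of
  \<open>Dy = 0\<close> is determined by its values on any \<open>N = max J - min J\<close> consecutive indices, and the
  shift by the period \<open>n\<close> acts on these windows by a transfer matrix \<open>A\<close>.  The lift \<open>V\<close> solves
  \<open>DV = 0\<close> coordinatewise, and \<open>N\<close> consecutive lifts form a basis: otherwise all lifts lie in a
  hyperplane, and a non-scalar map fixing that hyperplane would produce a second monodromy.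
  Hence \<open>V\<^sub>i\<^sub>+\<^sub>n = B V\<^sub>i\<close> with \<open>B\<close> similar to \<open>A\<^sup>T\<close>, and genericity makes \<open>B\<close> a multiple of \<open>M\<close>.

  For the other half consider the \<open>(n + N) \<times> (n + N)\<close> polynomial matrix \<open>L(z)\<close> formed by the
  \<open>n\<close> equations of \<open>D\<close> on a window of length \<open>n + N\<close> together with the Floquet conditions
  \<open>y\<^sub>w\<^sub>+\<^sub>n = z y\<^sub>w\<close>.  Eliminating the last \<open>n\<close> unknowns through the recurrence turns \<open>L(z)\<close> into
  a block triangular matrix with diagonal blocks a constant triangular matrix and \<open>zI - A\<close>; the
  Bloch substitution \<open>y\<^sub>t = z\<^sup>q\<close>, \<open>q = (t - 1) div n\<close>, on residue classes turns it into one with diagonal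
  blocks \<open>D(z)\<close> and \<open>-I\<close>.  Both column operations have determinants without nonzero roots, so
  \<open>det D(z)\<close> and \<open>\<chi>\<^sub>A(z)\<close> have the same nonzero roots with multiplicities.\<close>

section \<open>Finite sums and linear recurrences\<close>

lemma sum_eq_zero_imp_term_zero:
  fixes c g :: "'b \<Rightarrow> 'a::idom"
  assumes "finite J" "j0 \<in> J" "c j0 \<noteq> 0" "(\<Sum>j\<in>J. c j * g j) = 0"
    and "\<And>j. j \<in> J - {j0} \<Longrightarrow> g j = 0"
  shows "g j0 = 0"
proof -
  have "(\<Sum>j\<in>J - {j0}. c j * g j) = 0" by (rule sum.neutral) (use assms(5) in auto)
  hence "c j0 * g j0 = 0" using assms(4) by (simp add: sum.remove[OF assms(1,2)])
  thus ?thesis using assms(3) by simp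
qed

lemma recurrence_zero_if_window_zero:
  fixes a :: "int \<Rightarrow> int \<Rightarrow> 'a::idom" and g :: "int \<Rightarrow> 'a"
  assumes J: "finite J" "J \<noteq> {}"
    and ends: "\<And>i. a (Min J) i \<noteq> 0" "\<And>i. a (Max J) i \<noteq> 0"
    and sol: "\<And>i. (\<Sum>j\<in>J. a j i * g (i + j)) = 0"
    and win: "\<And>t. t0 \<le> t \<Longrightarrow> t < t0 + (Max J - Min J) \<Longrightarrow> g t = 0"
  shows "g t = 0"
proof -
  define L where "L = Max J - Min J"
  define W where "W s \<longleftrightarrow> (\<forall>t. s \<le> t \<and> t < s + L \<longrightarrow> g t = 0)" for s
  have bounds: "Min J \<le> j" "j \<le> Max J" if "j \<in> J" for j using J that by auto
  have fwd: "g (s + L) = 0" if "W s" for s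
  proof -
    have "g (s - Min J + Max J) = 0"
    proof (rule sum_eq_zero_imp_term_zero[OF J(1) Max_in[OF J] ends(2) sol])
      fix j assume "j \<in> J - {Max J}"
      hence "Min J \<le> j" "j < Max J" using bounds by force+
      thus "g (s - Min J + j) = 0" using that unfolding W_def L_def by simp
    qed
    thus ?thesis by (simp add: L_def algebra_simps)
  qed
  have bwd: "g (s - 1) = 0" if "W s" for s
  proof -
    have "g (s - 1 - Min J + Min J) = 0"
    proof (rule sum_eq_zero_imp_term_zero[OF J(1) Min_in[OF J] ends(1) sol])
      fix j assume "j \<in> J - {Min J}"
      hence "Min J < j" "j \<le> Max J" using bounds by force+
      thus "g (s - 1 - Min J + j) = 0" using that unfolding W_def L_def by simp
    qed
    thus ?thesis by simp
  qed
  have step_up: "W (s + 1)" if "W s" for s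
    unfolding W_def
  proof (intro allI impI)
    fix t assume "s + 1 \<le> t \<and> t < s + 1 + L"
    hence "t < s + L \<or> t = s + L" by auto
    moreover have "s \<le> t" using \<open>s + 1 \<le> t \<and> _\<close> by simp
    ultimately show "g t = 0" using that fwd[OF that] unfolding W_def by blast
  qed
  have step_down: "W (s - 1)" if "W s" for s
    unfolding W_def
  proof (intro allI impI)
    fix t assume "s - 1 \<le> t \<and> t < s - 1 + L"
    hence "t = s - 1 \<or> s \<le> t \<and> t < s + L" by auto
    thus "g t = 0" using that bwd[OF that] unfolding W_def by blast
  qed
  have "W t0" using win unfolding W_def L_def by blast
  hence "W s" for s by (induction s rule: int_induct[where k = t0]) (use step_up step_down in blast)+
  from fwd[OF this[of "t - L"]] show ?thesis by simp
qed

lemma sum_window_reindex: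
  fixes J :: "int set" and h :: "int \<Rightarrow> 'b::comm_monoid_add"
  assumes fin: "finite J" and sub: "\<And>j. j \<in> J \<Longrightarrow> lo \<le> j \<and> j < lo + int p"
  shows "(\<Sum>w<p. if lo + int w \<in> J then h (lo + int w) else 0) = (\<Sum>j\<in>J. h j)"
proof -
  have "(\<Sum>w<p. if lo + int w \<in> J then h (lo + int w) else 0) =
        (\<Sum>w\<in>{w\<in>{..<p}. lo + int w \<in> J}. h (lo + int w))"
    by (rule sum.inter_filter[symmetric]) simp
  also have "\<dots> = (\<Sum>j\<in>J. h j)"
    by (rule sum.reindex_bij_witness[where i = "\<lambda>j. nat (j - lo)" and j = "\<lambda>w. lo + int w"])
       (use sub in force)+
  finally show ?thesis .
qed

lemma sum_lessThan_add_split: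
  fixes f :: "nat \<Rightarrow> 'b::comm_monoid_add"
  shows "(\<Sum>w<k+n. f w) = (\<Sum>w<k. f w) + (\<Sum>w<n. f (k + w))"
  by (induction n) (auto simp: add.assoc)

lemma prod_list_map_upt: "prod_list (map f [0..<n]) = prod f {..<n}"
  by (subst prod.distinct_set_conv_list[symmetric]) (auto simp: atLeast0LessThan)

lemma nat_less_add_cases:
  fixes i n k :: nat
  assumes "i < n + k"
  obtains "i < n" | s where "i = n + s" "s < k"
  using assms by (metis add_less_cancel_left le_Suc_ex not_le)

lemma sum_delta_diff:
  fixes f :: "nat \<Rightarrow> 'b::comm_ring_1"
  assumes "s < P" "t < P" "s \<noteq> t"
  shows "(\<Sum>w<P. ((if w = s then X else 0) - (if w = t then 1 else 0)) * f w) = X * f s - f t"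
proof -
  have "(\<Sum>w<P. ((if w = s then X else 0) - (if w = t then 1 else 0)) * f w) =
     (\<Sum>w<P. (if w = s then X * f w else 0) - (if w = t then f w else 0))"
    by (rule sum.cong) (use assms in auto)
  also have "\<dots> = X * f s - f t" using assms by (simp add: sum_subtractf)
  finally show ?thesis .
qed

lemma index_mult_mat_sum:
  assumes "A \<in> carrier_mat nr k" "B \<in> carrier_mat k nc" "i < nr" "j < nc"
  shows "(A * B) $$ (i,j) = (\<Sum>w<k. A $$ (i,w) * B $$ (w,j))"
  using assms by (simp add: scalar_prod_def atLeast0LessThan)

lemma index_mult_mat_vec_sum:
  assumes "A \<in> carrier_mat nr k" "x \<in> carrier_vec k" "i < nr"
  shows "(A *\<^sub>v x) $ i = (\<Sum>w<k. A $$ (i,w) * x $ w)"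
  using assms by (simp add: scalar_prod_def atLeast0LessThan)

lemma det_nonzero_imp_inverse:
  assumes A: "(A :: 'a :: field mat) \<in> carrier_mat n n" and "det A \<noteq> 0"
  shows "\<exists>B. B \<in> carrier_mat n n \<and> A * B = 1\<^sub>m n \<and> B * A = 1\<^sub>m n"
  using det_non_zero_imp_unit[OF assms, of undefined] unfolding Units_def ring_mat_def by auto

lemma invertible_mat_iff_det_nonzero:
  assumes A: "(A :: 'a :: field mat) \<in> carrier_mat n n"
  shows "invertible_mat A \<longleftrightarrow> det A \<noteq> 0"
proof
  assume "invertible_mat A"
  then obtain B where AB: "A * B = 1\<^sub>m (dim_row A)" and BA: "B * A = 1\<^sub>m (dim_row B)"
    unfolding invertible_mat_def inverts_mat_def by auto
  have "dim_col B = n" using arg_cong[OF AB, of dim_col] A by simp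
  moreover have "dim_row B = n" using arg_cong[OF BA, of dim_col] A by simp
  ultimately have "det A * det B = 1" using det_mult[OF A, of B] AB A by auto
  thus "det A \<noteq> 0" by auto
next
  assume "det A \<noteq> 0"
  with det_nonzero_imp_inverse[OF A] show "invertible_mat A"
    using A unfolding invertible_mat_def inverts_mat_def by auto
qed

definition rank_one_update :: "nat \<Rightarrow> 'a::comm_ring_1 vec \<Rightarrow> 'a vec \<Rightarrow> 'a mat" where
  "rank_one_update k u v = mat k k (\<lambda>(i,j). (if i = j then 1 else 0) + u $ i * v $ j)"

lemma rank_one_update_carrier: "rank_one_update k u v \<in> carrier_mat k k"
  unfolding rank_one_update_def by simp

lemma rank_one_update_mult_vec:
  assumes u: "u \<in> carrier_vec k" and x: "x \<in> carrier_vec k"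
  shows "rank_one_update k u v *\<^sub>v x = x + (v \<bullet> x) \<cdot>\<^sub>v u"
proof (rule eq_vecI)
  fix i assume "i < dim_vec (x + (v \<bullet> x) \<cdot>\<^sub>v u)"
  hence i: "i < k" using u by simp
  have "(rank_one_update k u v *\<^sub>v x) $ i = (\<Sum>w<k. ((if i = w then 1 else 0) + u $ i * v $ w) * x $ w)"
    using i by (subst index_mult_mat_vec_sum[OF rank_one_update_carrier x i]) (simp add: rank_one_update_def)
  also have "\<dots> = (\<Sum>w<k. (if i = w then x $ w else 0) + u $ i * (v $ w * x $ w))"
    by (rule sum.cong) (auto simp: algebra_simps)
  also have "\<dots> = x $ i + u $ i * (v \<bullet> x)"
    using i x by (simp add: sum.distrib sum_distrib_left scalar_prod_def atLeast0LessThan)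
  finally show "(rank_one_update k u v *\<^sub>v x) $ i = (x + (v \<bullet> x) \<cdot>\<^sub>v u) $ i"
    using i u x by (simp add: mult.commute)
qed (use u x in \<open>simp add: rank_one_update_def\<close>)

lemma det_rank_one_update_nonzero:
  fixes u v :: "'a::field vec"
  assumes u: "u \<in> carrier_vec k" and v: "v \<in> carrier_vec k" and vu: "v \<bullet> u \<noteq> -1"
  shows "det (rank_one_update k u v) \<noteq> 0"
proof
  assume "det (rank_one_update k u v) = 0"
  then obtain x where x: "x \<in> carrier_vec k" "x \<noteq> 0\<^sub>v k" "rank_one_update k u v *\<^sub>v x = 0\<^sub>v k"
    using det_0_iff_vec_prod_zero_field[OF rank_one_update_carrier] by blast
  have sum0: "x + (v \<bullet> x) \<cdot>\<^sub>v u = 0\<^sub>v k" using x(3) rank_one_update_mult_vec[OF u x(1)] by simp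
  have x_eq: "x $ i = - (v \<bullet> x) * u $ i" if "i < k" for i
  proof -
    have "(x + (v \<bullet> x) \<cdot>\<^sub>v u) $ i = 0" using sum0 that by simp
    thus ?thesis using that u by (simp add: eq_neg_iff_add_eq_0)
  qed
  have "v \<bullet> x = (\<Sum>i<k. v $ i * x $ i)"
    using x(1) by (simp add: scalar_prod_def atLeast0LessThan)
  also have "\<dots> = (\<Sum>i<k. v $ i * (- (v \<bullet> x) * u $ i))"
    by (rule sum.cong) (simp_all add: x_eq)
  also have "\<dots> = - (v \<bullet> x) * (\<Sum>i<k. v $ i * u $ i)"
    by (simp add: sum_distrib_left algebra_simps)
  also have "(\<Sum>i<k. v $ i * u $ i) = v \<bullet> u"
    using u by (simp add: scalar_prod_def atLeast0LessThan)
  finally have "(v \<bullet> x) * (1 + v \<bullet> u) = 0" by (simp add: algebra_simps eq_neg_iff_add_eq_0)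
  moreover have "1 + v \<bullet> u \<noteq> 0" using vu by (metis add.commute add_eq_0_iff)
  ultimately have "v \<bullet> x = 0" by simp
  hence "x = 0\<^sub>v k" using x(1) x_eq by (intro eq_vecI) simp_all
  with x(2) show False ..
qed

lemma smult_vec_cancel:
  fixes x :: "'a::field vec"
  assumes x: "x \<in> carrier_vec k" "x \<noteq> 0\<^sub>v k" and eq: "c \<cdot>\<^sub>v x = d \<cdot>\<^sub>v x"
  shows "c = d"
proof -
  obtain j where j: "j < k" "x $ j \<noteq> 0"
    using x by (metis eq_vecI carrier_vecD index_zero_vec(1,2))
  have "c * x $ j = d * x $ j" using arg_cong[OF eq, of "\<lambda>y. y $ j"] j x by simp
  thus ?thesis using j by simp
qed

lemma smult_one_mat_mult_vec:
  fixes x :: "'a::comm_ring_1 vec"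
  assumes "x \<in> carrier_vec k" shows "(c \<cdot>\<^sub>m 1\<^sub>m k) *\<^sub>v x = c \<cdot>\<^sub>v x"
  by (rule eq_vecI) (use assms in auto)

lemma order_mult_nonroot:
  assumes "p * q \<noteq> 0" "poly q y \<noteq> 0"
  shows "order y (p * q) = order y p"
  using order_mult[OF assms(1)] order_0I[OF assms(2)] by simp

abbreviation cpoly :: "real \<Rightarrow> complex poly" where "cpoly c \<equiv> [:complex_of_real c:]"

lemma sum_cpoly: "(\<Sum>w\<in>A. cpoly (f w)) = cpoly (\<Sum>w\<in>A. f w)"
  by (induction A rule: infinite_finite_induct) auto

lemma cpoly_mult_monom: "cpoly x * monom 1 e = monom (complex_of_real x) e"
  by (metis monom_0 mult_monom mult.right_neutral add_0)

lemma proots_eq_scaled_nonzero_roots: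
  fixes p q :: "complex poly" and k :: complex
  assumes p: "p \<noteq> 0" and q: "q \<noteq> 0" and k: "k \<noteq> 0" and q0: "poly q 0 \<noteq> 0"
    and ord: "\<And>z. z \<noteq> 0 \<Longrightarrow> order z p = order (z / k) q"
  shows "proots q = image_mset (\<lambda>z. (1 / k) * z) (filter_mset (\<lambda>z. z \<noteq> 0) (proots p))"
proof (rule multiset_eqI)
  fix y
  let ?R = "filter_mset (\<lambda>z. z \<noteq> 0) (proots p)"
  have "(*) (1 / k) -` {y} = {k * y}" using k by (auto simp: field_simps)
  hence "count (image_mset (\<lambda>z. (1 / k) * z) ?R) y = (\<Sum>z\<in>{k * y} \<inter> set_mset ?R. count ?R z)"
    by (simp only: count_image_mset)
  also have "\<dots> = count ?R (k * y)" by (cases "k * y \<in># ?R") (auto simp: not_in_iff)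
  also have "\<dots> = (if y = 0 then 0 else order (k * y) p)" using k p by auto
  also have "\<dots> = count (proots q) y"
    using k q order_0I[OF q0] ord[of "k * y"] by auto
  finally show "count (proots q) y = count (image_mset (\<lambda>z. (1 / k) * z) ?R) y" by simp
qed

section \<open>The transfer matrix of a periodic difference operator\<close>

locale periodic_DO =
  fixes J :: "int set" and n :: nat and a :: "int \<Rightarrow> int \<Rightarrow> real"
  assumes finite_J: "finite J" and card_J: "2 \<le> card J" and n_pos: "1 \<le> n"
    and a_periodic: "\<forall>j\<in>J. periodic_seq n (a j)"
    and a_ends: "\<forall>i. a (Min J) i \<noteq> 0 \<and> a (Max J) i \<noteq> 0"
begin

abbreviation "jmin \<equiv> Min J"
abbreviation "jmax \<equiv> Max J"
abbreviation "N \<equiv> lift_dim J"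
abbreviation "p \<equiv> n + N"

lemma J_nonempty: "J \<noteq> {}" using card_J by auto
lemma jmax_in: "jmax \<in> J" using finite_J J_nonempty by simp
lemma jmin_le: "j \<in> J \<Longrightarrow> jmin \<le> j" using finite_J by simp
lemma le_jmax: "j \<in> J \<Longrightarrow> j \<le> jmax" using finite_J by simp

lemma jmin_less_jmax: "jmin < jmax"
proof (rule ccontr)
  assume "\<not> jmin < jmax"
  hence "J \<subseteq> {jmin}" using jmin_le le_jmax by force
  hence "card J \<le> 1" using card_mono[of "{jmin}" J] by auto
  thus False using card_J by simp
qed

lemma lift_dim_eq: "int N = jmax - jmin"
  unfolding lift_dim_def using jmin_less_jmax by simp

lemma a_periodic': "j \<in> J \<Longrightarrow> a j (i + int n) = a j i"
  using a_periodic unfolding periodic_seq_def by blast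

definition wpos :: "nat \<Rightarrow> int" where "wpos w = int w + 1 + jmin"

lemma solution_zero_if_window_zero:
  assumes sol: "\<And>i. (\<Sum>j\<in>J. a j i * y (i + j)) = 0"
    and win: "\<And>c. c < N \<Longrightarrow> y (t + int c) = 0"
  shows "y s = 0"
proof (rule recurrence_zero_if_window_zero[OF finite_J J_nonempty _ _ sol, of t])
  fix u assume "t \<le> u" "u < t + (jmax - jmin)"
  thus "y u = 0" using win[of "nat (u - t)"] lift_dim_eq by simp
qed (use a_ends in auto)

text \<open>Row \<open>r < n\<close> of \<open>op_mat\<close> is the equation \<open>(Dy)\<^sub>r\<^sub>+\<^sub>1 = 0\<close> in the unknowns
  \<open>y (wpos w)\<close>, \<open>w < p\<close>, which is the window of indices met by these \<open>n\<close> equations.\<close>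
definition op_mat :: "real mat" where
  "op_mat = mat n p (\<lambda>(r,w). if int w + jmin - int r \<in> J then a (int w + jmin - int r) (int r + 1) else 0)"

lemma op_mat_row_sum:
  assumes r: "r < n"
  shows "(\<Sum>w<p. op_mat $$ (r,w) * y (wpos w)) = (\<Sum>j\<in>J. a j (int r + 1) * y (int r + 1 + j))"
proof -
  have "(\<Sum>w<p. op_mat $$ (r,w) * y (wpos w)) =
     (\<Sum>w<p. if (jmin - int r) + int w \<in> J
              then a ((jmin - int r) + int w) (int r + 1) * y (int r + 1 + ((jmin - int r) + int w)) else 0)"
    by (rule sum.cong, auto simp: op_mat_def r wpos_def algebra_simps)
  also have "\<dots> = (\<Sum>j\<in>J. a j (int r + 1) * y (int r + 1 + j))"
    by (rule sum_window_reindex[OF finite_J]) (use jmin_le le_jmax lift_dim_eq r in force)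
  finally show ?thesis .
qed

definition op_head :: "real mat" where "op_head = mat n N (\<lambda>(r,w). op_mat $$ (r, w))"
definition op_tail :: "real mat" where "op_tail = mat n n (\<lambda>(r,k). op_mat $$ (r, N + k))"

lemma op_head_carrier: "op_head \<in> carrier_mat n N" unfolding op_head_def by simp
lemma op_tail_carrier: "op_tail \<in> carrier_mat n n" unfolding op_tail_def by simp

lemma op_tail_above_diag_zero: "r < k \<Longrightarrow> k < n \<Longrightarrow> op_tail $$ (r,k) = 0"
  unfolding op_tail_def op_mat_def using lift_dim_eq le_jmax by force

lemma op_tail_diag: "r < n \<Longrightarrow> op_tail $$ (r,r) = a jmax (int r + 1)"
  unfolding op_tail_def op_mat_def using lift_dim_eq jmax_in by auto

lemma det_op_tail_nonzero: "det op_tail \<noteq> 0"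
proof -
  have "det op_tail = prod_list (diag_mat op_tail)"
    by (rule det_lower_triangular[OF _ op_tail_carrier]) (simp add: op_tail_above_diag_zero)
  also have "\<dots> = (\<Prod>r<n. a jmax (int r + 1))"
    unfolding diag_mat_def using op_tail_carrier op_tail_diag by (simp add: prod_list_map_upt)
  finally show ?thesis using a_ends by simp
qed

definition op_tail_inv :: "real mat" where
  "op_tail_inv = (SOME B. B \<in> carrier_mat n n \<and> op_tail * B = 1\<^sub>m n \<and> B * op_tail = 1\<^sub>m n)"

lemma op_tail_inv: "op_tail_inv \<in> carrier_mat n n" "op_tail * op_tail_inv = 1\<^sub>m n" "op_tail_inv * op_tail = 1\<^sub>m n"
  using someI_ex[OF det_nonzero_imp_inverse[OF op_tail_carrier det_op_tail_nonzero]]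
  unfolding op_tail_inv_def by auto

text \<open>Column \<open>c\<close> of \<open>ext_mat\<close> is the solution of \<open>op_mat\<close> whose first \<open>N\<close> entries form
  the unit vector \<open>e\<^sub>c\<close>; it exists because \<open>op_tail\<close> is triangular with diagonal \<open>a jmax\<close>.\<close>
definition ext_low :: "real mat" where "ext_low = op_tail_inv * (- op_head)"
definition ext_mat :: "real mat" where
  "ext_mat = mat p N (\<lambda>(w,c). if w < N then (if w = c then 1 else 0) else ext_low $$ (w - N, c))"
definition transfer_mat :: "real mat" where "transfer_mat = mat N N (\<lambda>(s,c). ext_mat $$ (s + n, c))"

lemma ext_low_carrier: "ext_low \<in> carrier_mat n N"
  unfolding ext_low_def using op_tail_inv op_head_carrier by auto
lemma transfer_mat_carrier: "transfer_mat \<in> carrier_mat N N" unfolding transfer_mat_def by simp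

lemma ext_mat_head: "w < N \<Longrightarrow> c < N \<Longrightarrow> ext_mat $$ (w,c) = (if w = c then 1 else 0)"
  unfolding ext_mat_def by (subst index_mat) auto
lemma ext_mat_tail: "k < n \<Longrightarrow> c < N \<Longrightarrow> ext_mat $$ (N + k,c) = ext_low $$ (k, c)"
  unfolding ext_mat_def by (subst index_mat) auto

lemma op_tail_ext_low: "op_tail * ext_low = - op_head"
proof -
  have "op_tail * ext_low = (op_tail * op_tail_inv) * (- op_head)" unfolding ext_low_def
    using assoc_mult_mat[OF op_tail_carrier op_tail_inv(1) uminus_carrier_mat[OF op_head_carrier]] by simp
  thus ?thesis using op_tail_inv op_head_carrier by simp
qed

lemma op_mat_ext_mat: assumes r: "r < n" and c: "c < N"
  shows "(\<Sum>w<p. op_mat $$ (r,w) * ext_mat $$ (w,c)) = 0"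
proof -
  have "(\<Sum>w<p. op_mat $$ (r,w) * ext_mat $$ (w,c)) =
        (\<Sum>w<N. op_mat $$ (r,w) * ext_mat $$ (w,c)) + (\<Sum>k<n. op_mat $$ (r,N+k) * ext_mat $$ (N+k,c))"
    using sum_lessThan_add_split[of _ N n] by (simp add: add.commute)
  also have "(\<Sum>w<N. op_mat $$ (r,w) * ext_mat $$ (w,c)) = (\<Sum>w<N. if w = c then op_mat $$ (r,w) else 0)"
    by (rule sum.cong) (use c in \<open>auto simp: ext_mat_head\<close>)
  also have "\<dots> = op_head $$ (r,c)"
    using c r by (simp add: op_head_def)
  also have "(\<Sum>k<n. op_mat $$ (r,N+k) * ext_mat $$ (N+k,c)) = (op_tail * ext_low) $$ (r,c)"
    using c r by (subst index_mult_mat_sum[OF op_tail_carrier ext_low_carrier r c])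
                 (simp add: ext_mat_tail op_tail_def)
  also have "\<dots> = - op_head $$ (r,c)" unfolding op_tail_ext_low using r c op_head_carrier by simp
  finally show ?thesis by simp
qed

lemma solution_window_equation:
  assumes sol: "\<And>i. (\<Sum>j\<in>J. a j i * y (i + j)) = 0"
  shows "op_tail *\<^sub>v vec n (\<lambda>k. y (wpos (N + k))) = (- op_head) *\<^sub>v vec N (\<lambda>c. y (wpos c))"
    (is "op_tail *\<^sub>v ?y_tail = _ *\<^sub>v ?y_head")
proof (rule eq_vecI)
  have y_head: "?y_head \<in> carrier_vec N" and y_tail: "?y_tail \<in> carrier_vec n" by auto
  fix r assume "r < dim_vec ((- op_head) *\<^sub>v ?y_head)"
  hence r: "r < n" using op_head_carrier by simp
  have "0 = (\<Sum>w<p. op_mat $$ (r,w) * y (wpos w))" using op_mat_row_sum[OF r] sol by simp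
  also have "\<dots> = (\<Sum>w<N. op_mat $$ (r,w) * y (wpos w)) + (\<Sum>k<n. op_mat $$ (r,N+k) * y (wpos (N+k)))"
    using sum_lessThan_add_split[of _ N n] by (simp add: add.commute)
  also have "(\<Sum>w<N. op_mat $$ (r,w) * y (wpos w)) = (op_head *\<^sub>v ?y_head) $ r"
    using r by (subst index_mult_mat_vec_sum[OF op_head_carrier y_head r]) (simp add: op_head_def)
  also have "(\<Sum>k<n. op_mat $$ (r,N+k) * y (wpos (N+k))) = (op_tail *\<^sub>v ?y_tail) $ r"
    using r by (subst index_mult_mat_vec_sum[OF op_tail_carrier y_tail r]) (simp add: op_tail_def)
  finally show "(op_tail *\<^sub>v ?y_tail) $ r = ((- op_head) *\<^sub>v ?y_head) $ r" using r op_head_carrier y_head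
    by (simp add: eq_neg_iff_add_eq_0 add.commute)
qed (use op_tail_carrier op_head_carrier in auto)

lemma solution_ext_low:
  assumes sol: "\<And>i. (\<Sum>j\<in>J. a j i * y (i + j)) = 0" and k: "k < n"
  shows "y (wpos (N + k)) = (\<Sum>c<N. ext_low $$ (k,c) * y (wpos c))"
proof -
  define y_head where "y_head = vec N (\<lambda>c. y (wpos c))"
  define y_tail where "y_tail = vec n (\<lambda>k. y (wpos (N + k)))"
  have y_head: "y_head \<in> carrier_vec N" and y_tail: "y_tail \<in> carrier_vec n"
    unfolding y_head_def y_tail_def by auto
  have "y_tail = op_tail_inv *\<^sub>v (op_tail *\<^sub>v y_tail)"
    using op_tail_inv op_tail_carrier y_tail by (simp flip: assoc_mult_mat_vec)
  also have "\<dots> = op_tail_inv *\<^sub>v ((- op_head) *\<^sub>v y_head)"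
    unfolding y_tail_def y_head_def solution_window_equation[OF sol] ..
  also have "\<dots> = ext_low *\<^sub>v y_head" unfolding ext_low_def
    by (rule assoc_mult_mat_vec[symmetric, OF op_tail_inv(1) uminus_carrier_mat[OF op_head_carrier] y_head])
  finally have "y_tail $ k = (ext_low *\<^sub>v y_head) $ k" by simp
  also have "\<dots> = (\<Sum>c<N. ext_low $$ (k,c) * y (wpos c))"
    using k by (subst index_mult_mat_vec_sum[OF ext_low_carrier y_head k]) (simp add: y_head_def)
  finally show ?thesis using k by (simp add: y_tail_def)
qed

lemma solution_transfer:
  assumes sol: "\<And>i. (\<Sum>j\<in>J. a j i * y (i + j)) = 0" and s: "s < N"
  shows "y (wpos (n + s)) = (\<Sum>c<N. transfer_mat $$ (s,c) * y (wpos c))"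
proof (cases "n + s < N")
  case True
  have "(\<Sum>c<N. transfer_mat $$ (s,c) * y (wpos c)) = (\<Sum>c<N. if c = n + s then y (wpos c) else 0)"
    by (rule sum.cong) (use s True in \<open>auto simp: transfer_mat_def ext_mat_head add.commute\<close>)
  then show ?thesis using True by simp
next
  case False
  then obtain k where k: "k < n" "s + n = N + k" using s by (metis add.commute add_less_cancel_left le_Suc_ex not_le)
  have "(\<Sum>c<N. transfer_mat $$ (s,c) * y (wpos c)) = (\<Sum>c<N. ext_low $$ (k,c) * y (wpos c))"
    by (rule sum.cong) (use s k in \<open>auto simp: transfer_mat_def ext_mat_tail\<close>)
  also have "\<dots> = y (wpos (n + s))" using solution_ext_low[OF sol k(1)] k(2) by (simp add: add.commute)
  finally show ?thesis by simp
qed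

end

section \<open>The determinant of \<open>D(z)\<close> and the characteristic polynomial of the transfer matrix\<close>

context periodic_DO
begin

text \<open>Rows \<open>r < n\<close> of \<open>L_mat\<close> are the operator equations \<open>op_mat\<close>, row \<open>n + s\<close> is the
  Floquet condition \<open>y (wpos (n + s)) = z y (wpos s)\<close>.  Multiplying \<open>L_mat\<close> from the right by
  \<open>Q_transfer\<close> resp. \<open>Q_bloch\<close> exhibits \<open>det L_mat\<close> both as \<open>\<chi>\<^sub>A(z)\<close> and as \<open>det D(z)\<close>,
  up to factors without nonzero roots.\<close>
definition L_mat :: "complex poly mat" where
  "L_mat = mat p p (\<lambda>(i,w). if i < n then cpoly (op_mat $$ (i,w))
        else (if w = i - n then [:0,1:] else 0) - (if w = i then 1 else 0))"

lemma L_mat_carrier: "L_mat \<in> carrier_mat p p" unfolding L_mat_def by simp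

lemma L_mat_top: "i < n \<Longrightarrow> w < p \<Longrightarrow> L_mat $$ (i,w) = cpoly (op_mat $$ (i,w))"
  unfolding L_mat_def by simp

lemma L_mat_bottom: "s < N \<Longrightarrow> w < p \<Longrightarrow>
   L_mat $$ (n + s,w) = (if w = s then [:0,1:] else 0) - (if w = n + s then 1 else 0)"
  unfolding L_mat_def by simp

lemma L_mat_bottom_sum:
  assumes s: "s < N"
  shows "(\<Sum>w<p. L_mat $$ (n + s,w) * f w) = [:0,1:] * f s - f (n + s)"
proof -
  have "(\<Sum>w<p. L_mat $$ (n + s,w) * f w) =
        (\<Sum>w<p. ((if w = s then [:0,1:] else 0) - (if w = n + s then 1 else 0)) * f w)"
    by (rule sum.cong) (auto simp: L_mat_bottom s)
  also have "\<dots> = [:0,1:] * f s - f (n + s)"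
    by (rule sum_delta_diff) (use s n_pos in auto)
  finally show ?thesis .
qed

definition Q_transfer :: "complex poly mat" where
  "Q_transfer = mat p p (\<lambda>(w,c). if c < n then (if w = N + c then 1 else 0) else cpoly (ext_mat $$ (w, c - n)))"
definition op_tail_poly :: "complex poly mat" where "op_tail_poly = map_mat cpoly op_tail"
definition transfer_mat_cx :: "complex mat" where "transfer_mat_cx = map_mat complex_of_real transfer_mat"
definition L_Q_transfer_21 :: "complex poly mat" where
  "L_Q_transfer_21 = mat N n (\<lambda>(s,c). L_mat $$ (n + s, N + c))"

lemma Q_transfer_carrier: "Q_transfer \<in> carrier_mat p p" unfolding Q_transfer_def by simp
lemma op_tail_poly_carrier: "op_tail_poly \<in> carrier_mat n n"
  unfolding op_tail_poly_def using op_tail_carrier by simp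
lemma transfer_mat_cx_carrier: "transfer_mat_cx \<in> carrier_mat N N"
  unfolding transfer_mat_cx_def using transfer_mat_carrier by simp
lemma L_Q_transfer_21_carrier: "L_Q_transfer_21 \<in> carrier_mat N n" unfolding L_Q_transfer_21_def by simp

lemma L_mat_Q_transfer_left:
  assumes "i < p" "c < n"
  shows "(L_mat * Q_transfer) $$ (i,c) = L_mat $$ (i, N + c)"
proof -
  have "(L_mat * Q_transfer) $$ (i,c) = (\<Sum>w<p. L_mat $$ (i,w) * (if w = N + c then 1 else 0))"
    using assms by (subst index_mult_mat_sum[OF L_mat_carrier Q_transfer_carrier]) (auto simp: Q_transfer_def)
  also have "\<dots> = (\<Sum>w<p. if w = N + c then L_mat $$ (i,w) else 0)"
    by (rule sum.cong) auto
  finally show ?thesis using assms by simp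
qed

lemma Q_transfer_right: "w < p \<Longrightarrow> c < N \<Longrightarrow> Q_transfer $$ (w, n + c) = cpoly (ext_mat $$ (w, c))"
  unfolding Q_transfer_def by simp

lemma L_mat_Q_transfer_top_right:
  assumes i: "i < n" and c: "c < N"
  shows "(L_mat * Q_transfer) $$ (i, n + c) = 0"
proof -
  have "(L_mat * Q_transfer) $$ (i, n + c) = (\<Sum>w<p. cpoly (op_mat $$ (i,w) * ext_mat $$ (w,c)))"
    using i c by (subst index_mult_mat_sum[OF L_mat_carrier Q_transfer_carrier])
                 (auto intro: sum.cong simp: Q_transfer_right L_mat_top)
  thus ?thesis unfolding sum_cpoly op_mat_ext_mat[OF i c] by simp
qed

lemma L_mat_Q_transfer_bottom_right:
  assumes s: "s < N" and c: "c < N"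
  shows "(L_mat * Q_transfer) $$ (n + s, n + c) = char_poly_matrix transfer_mat_cx $$ (s, c)"
proof -
  have "(L_mat * Q_transfer) $$ (n + s, n + c) = (\<Sum>w<p. L_mat $$ (n + s,w) * cpoly (ext_mat $$ (w, c)))"
    using s c by (subst index_mult_mat_sum[OF L_mat_carrier Q_transfer_carrier])
                 (auto intro: sum.cong simp: Q_transfer_right)
  also have "\<dots> = [:0,1:] * cpoly (ext_mat $$ (s, c)) - cpoly (ext_mat $$ (n + s, c))"
    by (rule L_mat_bottom_sum[OF s])
  also have "\<dots> = char_poly_matrix transfer_mat_cx $$ (s, c)"
    using s c transfer_mat_cx_carrier
    by (simp add: char_poly_matrix_def ext_mat_head transfer_mat_cx_def transfer_mat_def add.commute)
  finally show ?thesis .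
qed

lemma L_mat_Q_transfer:
  "L_mat * Q_transfer = four_block_mat op_tail_poly (0\<^sub>m n N) L_Q_transfer_21 (char_poly_matrix transfer_mat_cx)"
  (is "_ = ?B")
proof (rule eq_matI)
  have B: "?B \<in> carrier_mat p p" using op_tail_poly_carrier L_Q_transfer_21_carrier
      char_poly_matrix_closed[OF transfer_mat_cx_carrier] by auto
  fix i c assume "i < dim_row ?B" "c < dim_col ?B"
  hence i: "i < p" and c: "c < p" using B by auto
  show "(L_mat * Q_transfer) $$ (i,c) = ?B $$ (i,c)"
  proof (cases "c < n")
    case True
    show ?thesis
    proof (cases rule: nat_less_add_cases[OF i])
      case 1
      then show ?thesis using True op_tail_poly_carrier L_Q_transfer_21_carrier op_tail_carrier
        by (simp add: L_mat_Q_transfer_left L_mat_top op_tail_poly_def op_tail_def)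
    next
      case (2 s)
      then show ?thesis using True op_tail_poly_carrier char_poly_matrix_closed[OF transfer_mat_cx_carrier]
        by (simp add: L_mat_Q_transfer_left L_Q_transfer_21_def)
    qed
  next
    case False
    then obtain c' where "c = n + c'" "c' < N" by (cases rule: nat_less_add_cases[OF c]) auto
    then show ?thesis using i B by (cases rule: nat_less_add_cases[OF i])
        (use op_tail_poly_carrier L_Q_transfer_21_carrier char_poly_matrix_closed[OF transfer_mat_cx_carrier]
          in \<open>simp_all add: L_mat_Q_transfer_top_right L_mat_Q_transfer_bottom_right\<close>)
  qed
qed (use L_mat_carrier Q_transfer_carrier op_tail_poly_carrier
       char_poly_matrix_closed[OF transfer_mat_cx_carrier] in auto)

lemma det_L_mat_Q_transfer: "det (L_mat * Q_transfer) = det op_tail_poly * char_poly transfer_mat_cx"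
  unfolding L_mat_Q_transfer char_poly_def
  by (rule det_four_block_mat_upper_right_zero[OF op_tail_poly_carrier refl L_Q_transfer_21_carrier
        char_poly_matrix_closed[OF transfer_mat_cx_carrier]])

lemma poly_det_op_tail_poly_nonzero: "poly (det op_tail_poly) z \<noteq> 0"
proof -
  have "det op_tail_poly = prod_list (diag_mat op_tail_poly)"
    by (rule det_lower_triangular[OF _ op_tail_poly_carrier])
       (use op_tail_carrier op_tail_above_diag_zero in \<open>simp add: op_tail_poly_def\<close>)
  also have "\<dots> = (\<Prod>r<n. cpoly (a jmax (int r + 1)))"
    unfolding diag_mat_def using op_tail_poly_carrier op_tail_carrier op_tail_diag
    by (simp add: prod_list_map_upt op_tail_poly_def)
  finally show ?thesis using a_ends by (simp add: poly_prod)
qed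

definition ext_low_poly :: "complex poly mat" where "ext_low_poly = map_mat cpoly ext_low"

lemma ext_low_poly_carrier: "ext_low_poly \<in> carrier_mat n N"
  unfolding ext_low_poly_def using ext_low_carrier by simp

lemma Q_transfer_block: "Q_transfer = four_block_mat (0\<^sub>m N n) (1\<^sub>m N) (1\<^sub>m n) ext_low_poly"
proof (rule eq_matI)
  fix w c assume "w < dim_row (four_block_mat (0\<^sub>m N n) (1\<^sub>m N) (1\<^sub>m n) ext_low_poly)"
    and "c < dim_col (four_block_mat (0\<^sub>m N n) (1\<^sub>m N) (1\<^sub>m n) ext_low_poly)"
  hence w: "w < N + n" and c: "c < p" using ext_low_poly_carrier by auto
  show "Q_transfer $$ (w,c) = four_block_mat (0\<^sub>m N n) (1\<^sub>m N) (1\<^sub>m n) ext_low_poly $$ (w,c)"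
    using c ext_low_poly_carrier ext_low_carrier
    by (cases rule: nat_less_add_cases[OF w])
       (auto simp: Q_transfer_def ext_mat_head ext_mat_tail ext_low_poly_def)
qed (use ext_low_poly_carrier in \<open>auto simp: Q_transfer_def\<close>)

lemma poly_det_Q_transfer_nonzero: "poly (det Q_transfer) z \<noteq> 0"
proof -
  define Q' where "Q' = four_block_mat (- ext_low_poly) (1\<^sub>m n) (1\<^sub>m N) (0\<^sub>m N n)"
  have Q': "Q' \<in> carrier_mat p p" unfolding Q'_def using ext_low_poly_carrier by auto
  have "Q_transfer * Q' = four_block_mat (0\<^sub>m N n * - ext_low_poly + 1\<^sub>m N * 1\<^sub>m N)
    (0\<^sub>m N n * 1\<^sub>m n + 1\<^sub>m N * 0\<^sub>m N n) (1\<^sub>m n * - ext_low_poly + ext_low_poly * 1\<^sub>m N)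
    (1\<^sub>m n * 1\<^sub>m n + ext_low_poly * 0\<^sub>m N n)"
    unfolding Q_transfer_block Q'_def
    by (rule mult_four_block_mat) (use ext_low_poly_carrier in auto)
  also have "\<dots> = four_block_mat (1\<^sub>m N) (0\<^sub>m N n) (0\<^sub>m n N) (1\<^sub>m n)"
  proof -
    have "- 0\<^sub>m N N + 1\<^sub>m N = (1\<^sub>m N :: complex poly mat)" by (rule eq_matI) auto
    thus ?thesis using ext_low_poly_carrier by simp
  qed
  also have "\<dots> = 1\<^sub>m p" by (simp add: add.commute)
  finally have "det Q_transfer * det Q' = 1" using det_mult[OF Q_transfer_carrier Q'] by simp
  hence "poly (det Q_transfer) z * poly (det Q') z = 1" by (metis poly_1 poly_mult)
  thus ?thesis by auto
qed

text \<open>\<open>bloch_mat\<close> substitutes for \<open>y (wpos w)\<close> the Bloch ansatz: on the residue class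
  \<open>k\<close> of \<open>wpos w - 1\<close> modulo \<open>n\<close> it is \<open>z\<close> to the power \<open>(wpos w - 1) div n\<close>, shifted by
  \<open>DO_shift J n\<close> as in the definition of \<open>DO_matrix_shifted\<close>.\<close>
definition shift :: int where "shift = int (DO_shift J n)"
definition bloch_res :: "nat \<Rightarrow> int" where "bloch_res w = (wpos w - 1) mod int n"
definition bloch_exp :: "nat \<Rightarrow> nat" where "bloch_exp w = nat ((wpos w - 1) div int n + shift)"
definition bloch_mat :: "complex poly mat" where
  "bloch_mat = mat p n (\<lambda>(w,k). if bloch_res w = int k then monom 1 (bloch_exp w) else 0)"
definition Q_bloch :: "complex poly mat" where
  "Q_bloch = mat p p (\<lambda>(w,c). if c < n then bloch_mat $$ (w,c) else (if w = c then 1 else 0))"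
abbreviation "Dz \<equiv> DO_matrix_shifted J a n"
definition L_Q_bloch_12 :: "complex poly mat" where "L_Q_bloch_12 = mat n N (\<lambda>(i,c). L_mat $$ (i, n + c))"
definition L_Q_bloch_22 :: "complex poly mat" where "L_Q_bloch_22 = mat N N (\<lambda>(s,c). L_mat $$ (n + s, n + c))"

lemma Dz_carrier: "Dz \<in> carrier_mat n n" unfolding DO_matrix_shifted_def by simp
lemma L_Q_bloch_12_carrier: "L_Q_bloch_12 \<in> carrier_mat n N" unfolding L_Q_bloch_12_def by simp
lemma L_Q_bloch_22_carrier: "L_Q_bloch_22 \<in> carrier_mat N N" unfolding L_Q_bloch_22_def by simp
lemma Q_bloch_carrier: "Q_bloch \<in> carrier_mat p p" unfolding Q_bloch_def by simp

lemma wpos_minus_1: "wpos w - 1 = int w + jmin" unfolding wpos_def by simp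

lemma bloch_exp_nonneg: "0 \<le> (int w + jmin) div int n + shift"
proof -
  have "jmin div int n \<le> (int w + jmin) div int n" by (rule zdiv_mono1) (use n_pos in auto)
  moreover have "- (jmin div int n) \<le> shift" unfolding shift_def DO_shift_def by simp
  ultimately show ?thesis by simp
qed

lemma bloch_shift: "bloch_res (n + s) = bloch_res s" "bloch_exp (n + s) = Suc (bloch_exp s)"
proof -
  have t: "wpos (n + s) - 1 = (wpos s - 1) + int n" unfolding wpos_def by simp
  show "bloch_res (n + s) = bloch_res s" unfolding bloch_res_def t by simp
  have "(wpos s - 1 + int n) div int n = (wpos s - 1) div int n + 1" using n_pos by simp
  thus "bloch_exp (n + s) = Suc (bloch_exp s)"
    unfolding bloch_exp_def t using bloch_exp_nonneg[of s] wpos_minus_1[of s] by simp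
qed

lemma bloch_mat_index:
  "w < p \<Longrightarrow> k < n \<Longrightarrow> bloch_mat $$ (w,k) = (if bloch_res w = int k then monom 1 (bloch_exp w) else 0)"
  unfolding bloch_mat_def by simp

lemma L_mat_bloch_mat_bottom: assumes s: "s < N" and c: "c < n"
  shows "(\<Sum>w<p. L_mat $$ (n + s, w) * bloch_mat $$ (w,c)) = 0"
  unfolding L_mat_bottom_sum[OF s] using s c bloch_shift[of s] by (simp add: bloch_mat_index monom_Suc)

lemma L_mat_bloch_mat_top: assumes i: "i < n" and c: "c < n"
  shows "(\<Sum>w<p. L_mat $$ (i, w) * bloch_mat $$ (w,c)) = Dz $$ (i,c)"
proof -
  define F where "F j = (if (int i + j) mod int n = int c then
      monom (complex_of_real (a j (int i + 1))) (nat ((int i + j) div int n + shift)) else 0)" for j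
  have "(\<Sum>w<p. L_mat $$ (i, w) * bloch_mat $$ (w,c)) =
     (\<Sum>w<p. if (jmin - int i) + int w \<in> J then F ((jmin - int i) + int w) else 0)"
  proof (rule sum.cong)
    fix w assume w: "w \<in> {..<p}"
    have e: "int i + (jmin - int i + int w) = wpos w - 1" unfolding wpos_def by simp
    show "L_mat $$ (i, w) * bloch_mat $$ (w,c) = (if (jmin - int i) + int w \<in> J then F ((jmin - int i) + int w) else 0)"
      using w i c unfolding F_def e
      by (auto simp: L_mat_top bloch_mat_index op_mat_def bloch_res_def bloch_exp_def cpoly_mult_monom
          smult_monom algebra_simps)
  qed simp
  also have "\<dots> = (\<Sum>j\<in>J. F j)"
    by (rule sum_window_reindex[OF finite_J]) (use jmin_le le_jmax lift_dim_eq i in force)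
  also have "\<dots> = Dz $$ (i,c)"
    unfolding DO_matrix_shifted_def using i c
    by (simp add: sum.inter_filter[OF finite_J] F_def shift_def cong: if_cong)
  finally show ?thesis .
qed

lemma L_mat_Q_bloch_index:
  assumes i: "i < p" and c: "c < p"
  shows "(L_mat * Q_bloch) $$ (i,c) = (if c < n then (\<Sum>w<p. L_mat $$ (i,w) * bloch_mat $$ (w,c)) else L_mat $$ (i,c))"
proof (cases "c < n")
  case True
  then show ?thesis using i c
    by (subst index_mult_mat_sum[OF L_mat_carrier Q_bloch_carrier i c]) (auto intro: sum.cong simp: Q_bloch_def)
next
  case False
  have "(L_mat * Q_bloch) $$ (i,c) = (\<Sum>w<p. L_mat $$ (i,w) * (if w = c then 1 else 0))"
    using False i c by (subst index_mult_mat_sum[OF L_mat_carrier Q_bloch_carrier i c]) (simp add: Q_bloch_def)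
  also have "\<dots> = (\<Sum>w<p. if w = c then L_mat $$ (i,w) else 0)"
    by (rule sum.cong) auto
  finally show ?thesis using False c by simp
qed

lemma L_mat_Q_bloch: "L_mat * Q_bloch = four_block_mat Dz L_Q_bloch_12 (0\<^sub>m N n) L_Q_bloch_22"
  (is "_ = ?B")
proof (rule eq_matI)
  fix i c assume "i < dim_row ?B" "c < dim_col ?B"
  hence i: "i < p" and c: "c < p" using Dz_carrier L_Q_bloch_22_carrier by auto
  show "(L_mat * Q_bloch) $$ (i,c) = ?B $$ (i,c)"
    using Dz_carrier L_Q_bloch_12_carrier L_Q_bloch_22_carrier
    by (cases rule: nat_less_add_cases[OF i]; cases rule: nat_less_add_cases[OF c])
       (simp_all add: L_mat_Q_bloch_index L_mat_bloch_mat_top L_mat_bloch_mat_bottom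
         L_Q_bloch_12_def L_Q_bloch_22_def)
qed (use Dz_carrier L_Q_bloch_22_carrier in \<open>auto simp: L_mat_def Q_bloch_def\<close>)

lemma det_L_Q_bloch_22: "det L_Q_bloch_22 = (-1) ^ N"
proof -
  have "det L_Q_bloch_22 = prod_list (diag_mat L_Q_bloch_22)"
    by (rule det_lower_triangular[OF _ L_Q_bloch_22_carrier]) (simp add: L_Q_bloch_22_def L_mat_bottom)
  also have "\<dots> = (\<Prod>s<N. -1)"
    unfolding diag_mat_def using L_Q_bloch_22_carrier n_pos
    by (simp add: prod_list_map_upt L_Q_bloch_22_def L_mat_bottom)
  finally show ?thesis by simp
qed

lemma det_L_mat_Q_bloch: "det (L_mat * Q_bloch) = det Dz * (-1) ^ N"
  unfolding L_mat_Q_bloch det_L_Q_bloch_22[symmetric]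
  by (rule det_four_block_mat_lower_left_zero[OF Dz_carrier L_Q_bloch_12_carrier refl L_Q_bloch_22_carrier])

definition bloch_head :: "complex poly mat" where "bloch_head = mat n n (\<lambda>(w,k). bloch_mat $$ (w,k))"
lemma bloch_head_carrier: "bloch_head \<in> carrier_mat n n" unfolding bloch_head_def by simp

lemma det_Q_bloch: "det Q_bloch = det bloch_head"
proof -
  have "Q_bloch = four_block_mat bloch_head (0\<^sub>m n N) (mat N n (\<lambda>(s,k). bloch_mat $$ (n + s,k))) (1\<^sub>m N)"
    by (rule eq_matI) (auto simp: Q_bloch_def bloch_head_def)
  thus ?thesis by (simp add: det_four_block_mat_upper_right_zero[OF bloch_head_carrier refl])
qed

lemma bloch_res_range: "0 \<le> bloch_res w" "bloch_res w < int n" unfolding bloch_res_def using n_pos by auto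

lemma bloch_res_inj: assumes "w < n" "w' < n" "bloch_res w = bloch_res w'" shows "w = w'"
proof -
  have "(int w + jmin) mod int n = (int w' + jmin) mod int n"
    using assms(3) unfolding bloch_res_def wpos_minus_1 .
  hence d: "int n dvd int w - int w'" by (simp add: mod_eq_dvd_iff)
  show ?thesis
  proof (rule ccontr)
    assume "w \<noteq> w'"
    hence "\<bar>int n\<bar> \<le> \<bar>int w - int w'\<bar>" using d by (intro dvd_imp_le_int) auto
    thus False using assms by auto
  qed
qed

text \<open>The rows of \<open>bloch_head\<close> carry single monomials in distinct columns, so \<open>bloch_head\<close>
  is a monomial matrix and \<open>det bloch_head\<close> divides a power of \<open>z\<close>.\<close>
definition bloch_deg :: nat where "bloch_deg = (\<Sum>w<n. bloch_exp w)"
definition bloch_head_adj :: "complex poly mat" where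
  "bloch_head_adj = mat n n (\<lambda>(k,w). if bloch_res w = int k then monom 1 (bloch_deg - bloch_exp w) else 0)"

lemma bloch_head_mult_adj: "bloch_head * bloch_head_adj = monom 1 bloch_deg \<cdot>\<^sub>m 1\<^sub>m n"
proof (rule eq_matI)
  fix w w' assume "w < dim_row (monom 1 bloch_deg \<cdot>\<^sub>m 1\<^sub>m n)" "w' < dim_col (monom 1 bloch_deg \<cdot>\<^sub>m 1\<^sub>m n)"
  hence w: "w < n" and w': "w' < n" by auto
  define k0 where "k0 = nat (bloch_res w)"
  have k0: "k0 < n" "bloch_res w = int k0" using bloch_res_range[of w] unfolding k0_def by auto
  have "(bloch_head * bloch_head_adj) $$ (w,w') = (\<Sum>k<n. bloch_head $$ (w,k) * bloch_head_adj $$ (k,w'))"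
    by (rule index_mult_mat_sum[OF bloch_head_carrier _ w w']) (simp add: bloch_head_adj_def)
  also have "\<dots> = (\<Sum>k<n. if k = k0 then (if bloch_res w' = int k0
                    then monom 1 (bloch_exp w) * monom 1 (bloch_deg - bloch_exp w') else 0) else 0)"
    by (rule sum.cong) (use w w' k0 in \<open>auto simp: bloch_head_def bloch_head_adj_def bloch_mat_index\<close>)
  also have "\<dots> = (if w = w' then monom 1 bloch_deg else 0)"
  proof (cases "w = w'")
    case True
    have "bloch_exp w \<le> bloch_deg" unfolding bloch_deg_def using w by (intro member_le_sum) auto
    then show ?thesis using True k0 by (simp add: mult_monom)
  next
    case False
    then show ?thesis using bloch_res_inj[OF w' w] k0 by auto
  qed
  finally show "(bloch_head * bloch_head_adj) $$ (w,w') = (monom 1 bloch_deg \<cdot>\<^sub>m 1\<^sub>m n) $$ (w,w')"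
    using w w' by simp
qed (auto simp: bloch_head_def bloch_head_adj_def)

lemma poly_det_bloch_head_nonzero:
  assumes "z \<noteq> 0" shows "poly (det bloch_head) z \<noteq> 0"
proof -
  have adj: "bloch_head_adj \<in> carrier_mat n n" unfolding bloch_head_adj_def by simp
  have "det bloch_head * det bloch_head_adj = monom 1 bloch_deg ^ n"
    using det_mult[OF bloch_head_carrier adj] unfolding bloch_head_mult_adj by simp
  hence e: "det bloch_head * det bloch_head_adj = monom 1 (bloch_deg * n)"
    by (simp add: monom_power mult.commute)
  have "poly (det bloch_head) z * poly (det bloch_head_adj) z = z ^ (bloch_deg * n)"
    using arg_cong[OF e, of "\<lambda>q. poly q z"] by (simp add: poly_monom)
  thus ?thesis using assms by auto
qed

lemma det_Dz_char_poly_identity: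
  "det Dz * ((-1) ^ N * det Q_transfer) = char_poly transfer_mat_cx * (det op_tail_poly * det bloch_head)"
proof -
  have bloch: "det L_mat * det bloch_head = det Dz * (-1) ^ N"
    using det_mult[OF L_mat_carrier Q_bloch_carrier] det_L_mat_Q_bloch det_Q_bloch by simp
  have transfer: "det L_mat * det Q_transfer = det op_tail_poly * char_poly transfer_mat_cx"
    using det_mult[OF L_mat_carrier Q_transfer_carrier] det_L_mat_Q_transfer by simp
  have "det Dz * ((-1) ^ N * det Q_transfer) = (det L_mat * det bloch_head) * det Q_transfer"
    unfolding bloch by (simp add: ac_simps)
  also have "\<dots> = (det L_mat * det Q_transfer) * det bloch_head" by (simp add: ac_simps)
  finally show ?thesis unfolding transfer by (simp add: ac_simps)
qed

lemma det_Dz_nonzero: "det Dz \<noteq> 0"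
proof
  assume "det Dz = 0"
  hence "char_poly transfer_mat_cx * (det op_tail_poly * det bloch_head) = 0"
    using det_Dz_char_poly_identity by simp
  moreover have "char_poly transfer_mat_cx \<noteq> 0"
    using degree_monic_char_poly[OF transfer_mat_cx_carrier] by auto
  moreover have "det op_tail_poly * det bloch_head \<noteq> 0"
    using poly_det_op_tail_poly_nonzero[of 1] poly_det_bloch_head_nonzero[of 1] by auto
  ultimately show False by simp
qed

lemma order_det_Dz:
  assumes z: "z \<noteq> 0"
  shows "order z (det Dz) = order z (char_poly transfer_mat_cx)"
proof -
  have nz: "det Dz * ((-1) ^ N * det Q_transfer) \<noteq> 0"
    using det_Dz_nonzero poly_det_Q_transfer_nonzero[of 0] by auto
  have "order z (det Dz) = order z (det Dz * ((-1) ^ N * det Q_transfer))"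
    by (rule order_mult_nonroot[symmetric, OF nz]) (simp add: poly_det_Q_transfer_nonzero)
  also have "\<dots> = order z (char_poly transfer_mat_cx)"
    unfolding det_Dz_char_poly_identity
    by (rule order_mult_nonroot) (use nz det_Dz_char_poly_identity poly_det_op_tail_poly_nonzero
        poly_det_bloch_head_nonzero[OF z] in auto)
  finally show ?thesis .
qed

end

section \<open>The monodromy of the polygon\<close>

locale DO_polygon = periodic_DO +
  fixes V :: "int \<Rightarrow> real vec" and M :: "real mat"
  assumes V_dim: "\<forall>i. V i \<in> carrier_vec (lift_dim J)"
    and V_nonzero: "\<forall>i. V i \<noteq> 0\<^sub>v (lift_dim J)"
    and M_carrier: "M \<in> carrier_mat (lift_dim J) (lift_dim J)" and M_invertible: "invertible_mat M"
    and twisted: "twisted_monodromy n V M"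
    and annihilated: "annihilates J a (lift_dim J) V"
    and monodromy_unique: "\<forall>M'. M' \<in> carrier_mat (lift_dim J) (lift_dim J) \<longrightarrow>
            invertible_mat M' \<longrightarrow> twisted_monodromy n V M' \<longrightarrow> (\<exists>c. c \<noteq> 0 \<and> M' = c \<cdot>\<^sub>m M)"
begin

lemma V_carrier[simp]: "V i \<in> carrier_vec N" using V_dim by blast
lemma dim_V[simp]: "dim_vec (V i) = N" using V_carrier by (rule carrier_vecD)

lemma det_M_nonzero: "det M \<noteq> 0"
  using M_invertible invertible_mat_iff_det_nonzero[OF M_carrier] by simp

lemma annihilated_lincomb: "(\<Sum>j\<in>J. a j i * (\<Sum>k<N. f k * V (i + j) $ k)) = 0"
proof -
  have "(\<Sum>j\<in>J. a j i * (\<Sum>k<N. f k * V (i + j) $ k)) = (\<Sum>k<N. f k * (\<Sum>j\<in>J. a j i * V (i + j) $ k))"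
    by (simp add: sum_distrib_left mult.left_commute sum.swap[of _ J])
  also have "\<dots> = 0" using annihilated unfolding annihilates_def by simp
  finally show ?thesis .
qed

lemma fixing_mat_is_scalar:
  assumes R: "R \<in> carrier_mat N N" "det R \<noteq> 0" and fixes_V: "\<And>i. R *\<^sub>v V i = V i"
  shows "\<exists>c. R = c \<cdot>\<^sub>m 1\<^sub>m N"
proof -
  obtain Mi where Mi: "Mi \<in> carrier_mat N N" "M * Mi = 1\<^sub>m N" "Mi * M = 1\<^sub>m N"
    using det_nonzero_imp_inverse[OF M_carrier det_M_nonzero] by blast
  have MR: "M * R \<in> carrier_mat N N" using M_carrier R(1) by simp
  have "invertible_mat (M * R)"
    using invertible_mat_iff_det_nonzero[OF MR] det_mult[OF M_carrier R(1)] det_M_nonzero R(2) by simp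
  moreover have "twisted_monodromy n V (M * R)"
    unfolding twisted_monodromy_def
  proof
    fix i
    obtain \<mu> where "\<mu> \<noteq> 0" "V (i + int n) = \<mu> \<cdot>\<^sub>v (M *\<^sub>v V i)"
      using twisted unfolding twisted_monodromy_def by blast
    moreover have "(M * R) *\<^sub>v V i = M *\<^sub>v V i" using M_carrier R(1) fixes_V by simp
    ultimately show "\<exists>\<mu>. \<mu> \<noteq> 0 \<and> V (i + int n) = \<mu> \<cdot>\<^sub>v ((M * R) *\<^sub>v V i)" by auto
  qed
  ultimately obtain c where "M * R = c \<cdot>\<^sub>m M" using monodromy_unique MR by blast
  hence "Mi * (M * R) = c \<cdot>\<^sub>m (Mi * M)" using mult_smult_distrib[OF Mi(1) M_carrier] by simp
  moreover have "Mi * (M * R) = R" using assoc_mult_mat[OF Mi(1) M_carrier R(1)] Mi R(1) by simp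
  ultimately show ?thesis using Mi(3) by auto
qed

text \<open>Otherwise a rank-one update of the identity that fixes the hyperplane \<open>v\<^sup>\<bottom>\<close>
  would compose with \<open>M\<close> to a second, non-proportional monodromy.\<close>
lemma lifts_span:
  assumes v: "v \<in> carrier_vec N" and orth: "\<And>i. v \<bullet> V i = 0"
  shows "v = 0\<^sub>v N"
proof (rule ccontr)
  assume "v \<noteq> 0\<^sub>v N"
  then obtain k where k: "k < N" "v $ k \<noteq> 0"
    using v by (metis eq_vecI carrier_vecD index_zero_vec(1,2))
  define u where "u = (1 / v $ k) \<cdot>\<^sub>v unit_vec N k"
  have u: "u \<in> carrier_vec N" "u \<noteq> 0\<^sub>v N" and vu: "v \<bullet> u = 1"
    using k v by (auto simp: u_def dest!: arg_cong[of _ _ "\<lambda>x. x $ k"])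
  define R where "R = rank_one_update N u v"
  have R_mult: "R *\<^sub>v x = x + (v \<bullet> x) \<cdot>\<^sub>v u" if "x \<in> carrier_vec N" for x
    unfolding R_def by (rule rank_one_update_mult_vec[OF u(1) that])
  have R_fixes: "R *\<^sub>v V i = V i" for i
    unfolding R_mult[OF V_carrier] orth by (rule eq_vecI) (use u(1) in auto)
  have "\<exists>c. R = c \<cdot>\<^sub>m 1\<^sub>m N"
  proof (rule fixing_mat_is_scalar[OF _ _ R_fixes])
    show "R \<in> carrier_mat N N" unfolding R_def by (rule rank_one_update_carrier)
    show "det R \<noteq> 0" unfolding R_def using det_rank_one_update_nonzero[OF u(1) v] vu by simp
  qed
  then obtain c where c: "R = c \<cdot>\<^sub>m 1\<^sub>m N" ..
  have "c \<cdot>\<^sub>v V 0 = 1 \<cdot>\<^sub>v V 0" using R_fixes[of 0] unfolding c by (simp add: smult_one_mat_mult_vec)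
  hence "c = 1" using smult_vec_cancel[OF V_carrier] V_nonzero by blast
  moreover have "c \<cdot>\<^sub>v u = 2 \<cdot>\<^sub>v u" using R_mult[OF u(1)] u(1) vu unfolding c
    by (intro eq_vecI) (auto simp: smult_one_mat_mult_vec dest!: arg_cong[of _ _ "\<lambda>x. x $ _"])
  hence "c = 2" using smult_vec_cancel[OF u] by blast
  ultimately show False by simp
qed

definition frame :: "int \<Rightarrow> real mat" where "frame t = mat N N (\<lambda>(k,c). V (t + int c) $ k)"

lemma frame_carrier: "frame t \<in> carrier_mat N N" unfolding frame_def by simp
lemma dim_frame[simp]: "dim_row (frame t) = N" "dim_col (frame t) = N" unfolding frame_def by simp_all

lemma det_frame_nonzero: "det (frame t) \<noteq> 0"
proof
  assume "det (frame t) = 0"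
  hence "det (transpose_mat (frame t)) = 0" using det_transpose[OF frame_carrier] by simp
  then obtain v where v: "v \<in> carrier_vec N" "v \<noteq> 0\<^sub>v N" "transpose_mat (frame t) *\<^sub>v v = 0\<^sub>v N"
    using det_0_iff_vec_prod_zero[of "transpose_mat (frame t)" N] frame_carrier by auto
  define y where "y i = (\<Sum>k<N. v $ k * V i $ k)" for i
  have "y i = 0" for i
  proof (rule solution_zero_if_window_zero)
    show "(\<Sum>j\<in>J. a j i * y (i + j)) = 0" for i unfolding y_def by (rule annihilated_lincomb)
    fix c assume c: "c < N"
    have "(transpose_mat (frame t) *\<^sub>v v) $ c = y (t + int c)"
      using c v(1) by (simp add: y_def frame_def scalar_prod_def atLeast0LessThan mult.commute)
    thus "y (t + int c) = 0" using v(3) c by simp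
  qed
  hence "v \<bullet> V i = 0" for i by (simp add: y_def scalar_prod_def atLeast0LessThan)
  thus False using lifts_span v(1,2) by blast
qed

lemma frame_shift_transfer: "frame (wpos 0 + int n) = frame (wpos 0) * transpose_mat transfer_mat"
proof (rule eq_matI)
  fix k s assume "k < dim_row (frame (wpos 0) * transpose_mat transfer_mat)"
    "s < dim_col (frame (wpos 0) * transpose_mat transfer_mat)"
  hence k: "k < N" and s: "s < N" using frame_carrier transfer_mat_carrier by auto
  have "(frame (wpos 0) * transpose_mat transfer_mat) $$ (k,s) = (\<Sum>c<N. transfer_mat $$ (s,c) * V (wpos c) $ k)"
    using k s transfer_mat_carrier
    by (subst index_mult_mat_sum[OF frame_carrier _ k s]) (auto intro: sum.cong simp: frame_def wpos_def ac_simps)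
  also have "\<dots> = V (wpos (n + s)) $ k"
    by (rule solution_transfer[symmetric, OF _ s])
       (use annihilated k in \<open>auto simp: annihilates_def\<close>)
  finally show "frame (wpos 0 + int n) $$ (k,s) = (frame (wpos 0) * transpose_mat transfer_mat) $$ (k,s)"
    using k s by (simp add: frame_def wpos_def add_ac)
qed (use frame_carrier transfer_mat_carrier in auto)

definition frame_inv :: "real mat" where
  "frame_inv = (SOME B. B \<in> carrier_mat N N \<and> frame (wpos 0) * B = 1\<^sub>m N \<and> B * frame (wpos 0) = 1\<^sub>m N)"

lemma frame_inv: "frame_inv \<in> carrier_mat N N" "frame (wpos 0) * frame_inv = 1\<^sub>m N"
  "frame_inv * frame (wpos 0) = 1\<^sub>m N"
  using someI_ex[OF det_nonzero_imp_inverse[OF frame_carrier det_frame_nonzero]] unfolding frame_inv_def by auto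

definition monodromy_mat :: "real mat" where "monodromy_mat = frame (wpos 0 + int n) * frame_inv"

lemma monodromy_mat_carrier: "monodromy_mat \<in> carrier_mat N N"
  unfolding monodromy_mat_def using frame_carrier frame_inv(1) by (rule mult_carrier_mat)

lemma det_monodromy_mat_nonzero: "det monodromy_mat \<noteq> 0"
proof -
  have "det (frame (wpos 0)) * det frame_inv = 1"
    using det_mult[OF frame_carrier[of "wpos 0"] frame_inv(1)] frame_inv(2) by simp
  thus ?thesis unfolding monodromy_mat_def det_mult[OF frame_carrier frame_inv(1)]
    using det_frame_nonzero by auto
qed

lemma col_frame: "c < N \<Longrightarrow> col (frame t) c = V (t + int c)"
  by (rule eq_vecI) (auto simp: frame_def)

lemma monodromy_mat_window: "c < N \<Longrightarrow> monodromy_mat *\<^sub>v V (wpos 0 + int c) = V (wpos 0 + int n + int c)"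
proof -
  assume c: "c < N"
  have "monodromy_mat * frame (wpos 0) = frame (wpos 0 + int n)"
    unfolding monodromy_mat_def using assoc_mult_mat[OF frame_carrier frame_inv(1) frame_carrier] frame_inv(3)
      right_mult_one_mat[OF frame_carrier] by simp
  hence "col (monodromy_mat * frame (wpos 0)) c = col (frame (wpos 0 + int n)) c" by simp
  thus ?thesis using c col_mult2[OF monodromy_mat_carrier frame_carrier c] by (simp add: col_frame)
qed

text \<open>Both sides of the claim are solutions of \<open>D\<close> in each coordinate, by \<open>n\<close>-periodicity
  of the coefficients, and they agree on the window at \<open>wpos 0\<close>.\<close>
lemma monodromy_mat_shift: "V (i + int n) = monodromy_mat *\<^sub>v V i"
proof (rule eq_vecI)
  fix k assume "k < dim_vec (monodromy_mat *\<^sub>v V i)"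
  hence k: "k < N" using monodromy_mat_carrier by simp
  have MV: "(monodromy_mat *\<^sub>v V t) $ k = (\<Sum>l<N. monodromy_mat $$ (k,l) * V t $ l)" for t
    by (rule index_mult_mat_vec_sum[OF monodromy_mat_carrier V_carrier k])
  define y where "y t = V (t + int n) $ k - (monodromy_mat *\<^sub>v V t) $ k" for t
  have "y t = 0" for t
  proof (rule solution_zero_if_window_zero)
    fix i
    have "(\<Sum>j\<in>J. a j i * V (i + j + int n) $ k) = (\<Sum>j\<in>J. a j (i + int n) * V ((i + int n) + j) $ k)"
      by (rule sum.cong) (auto simp: a_periodic' add_ac)
    also have "\<dots> = 0" using annihilated k unfolding annihilates_def by simp
    finally show "(\<Sum>j\<in>J. a j i * y (i + j)) = 0"
      using annihilated_lincomb[of i "\<lambda>l. monodromy_mat $$ (k,l)"]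
      by (simp add: y_def MV right_diff_distrib sum_subtractf)
  next
    fix c assume "c < N"
    thus "y (wpos 0 + int c) = 0" unfolding y_def using monodromy_mat_window[of c] by (simp add: ac_simps)
  qed
  thus "V (i + int n) $ k = (monodromy_mat *\<^sub>v V i) $ k" by (simp add: y_def)
qed (use monodromy_mat_carrier in simp)

lemma char_poly_scaled_M_eq_transfer: "\<exists>c. c \<noteq> 0 \<and> char_poly (c \<cdot>\<^sub>m M) = char_poly transfer_mat"
proof -
  have "invertible_mat monodromy_mat"
    using invertible_mat_iff_det_nonzero[OF monodromy_mat_carrier] det_monodromy_mat_nonzero by simp
  moreover have "twisted_monodromy n V monodromy_mat"
    unfolding twisted_monodromy_def using monodromy_mat_shift by (intro allI exI[of _ 1]) simp
  ultimately obtain c where c: "c \<noteq> 0" "monodromy_mat = c \<cdot>\<^sub>m M"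
    using monodromy_unique monodromy_mat_carrier by blast
  have "monodromy_mat = frame (wpos 0) * transpose_mat transfer_mat * frame_inv"
    unfolding monodromy_mat_def frame_shift_transfer ..
  hence "similar_mat monodromy_mat (transpose_mat transfer_mat)"
    using monodromy_mat_carrier transfer_mat_carrier frame_carrier frame_inv
    by (intro similar_matI[of _ _ "frame (wpos 0)" frame_inv N]) auto
  hence "char_poly monodromy_mat = char_poly transfer_mat"
    using char_poly_similar transfer_mat_carrier by fastforce
  thus ?thesis using c by auto
qed

abbreviation "M_cx \<equiv> map_mat complex_of_real M"

lemma M_cx_carrier: "M_cx \<in> carrier_mat N N" using M_carrier by simp

lemma char_poly_M_cx_nonzero: "char_poly M_cx \<noteq> 0"
  using degree_monic_char_poly[OF M_cx_carrier] by auto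

lemma poly_char_poly_M_cx_0: "poly (char_poly M_cx) 0 \<noteq> 0"
proof -
  have "char_matrix M_cx 0 = M_cx" unfolding char_matrix_def by (rule eq_matI) (use M_cx_carrier in auto)
  moreover have "det M_cx \<noteq> 0" using det_M_nonzero by simp
  ultimately have "\<not> eigenvalue M_cx 0" using eigenvalue_det[OF M_cx_carrier] by simp
  thus ?thesis using eigenvalue_root_char_poly[OF M_cx_carrier] by simp
qed

lemma order_det_DO_poly:
  "\<exists>k. k \<noteq> 0 \<and> (\<forall>z. z \<noteq> 0 \<longrightarrow> order z (det_DO_poly J a n) = order (z / k) (char_poly M_cx))"
proof -
  obtain c where c: "c \<noteq> 0" "char_poly (c \<cdot>\<^sub>m M) = char_poly transfer_mat" using char_poly_scaled_M_eq_transfer by blast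
  have "char_poly transfer_mat_cx = map_poly complex_of_real (char_poly (c \<cdot>\<^sub>m M))"
    unfolding transfer_mat_cx_def c(2) by (rule of_real_hom.char_poly_hom[OF transfer_mat_carrier])
  also have "\<dots> = char_poly (map_mat complex_of_real (c \<cdot>\<^sub>m M))"
    by (rule of_real_hom.char_poly_hom[symmetric, of _ N]) (use M_carrier in simp)
  also have "map_mat complex_of_real (c \<cdot>\<^sub>m M) = complex_of_real c \<cdot>\<^sub>m M_cx"
    by (rule eq_matI) auto
  finally have "char_poly transfer_mat_cx = char_poly (complex_of_real c \<cdot>\<^sub>m M_cx)" .
  hence "order z (det_DO_poly J a n) = order (z / complex_of_real c) (char_poly M_cx)" if "z \<noteq> 0" for z
    using order_det_Dz[OF that] order_char_poly_smult[OF M_cx_carrier] c(1)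
    by (simp add: det_DO_poly_def)
  thus ?thesis using c(1) by (intro exI[of _ "complex_of_real c"]) auto
qed

end

theorem mainTheorem4:
  fixes J :: "int set" and n :: nat
    and a :: "int \<Rightarrow> int \<Rightarrow> real"
    and V :: "int \<Rightarrow> real vec"
    and M :: "real mat"
  assumes J: "finite J" "2 \<le> card J"
    and n: "1 \<le> n"
    and a_periodic: "\<forall>j\<in>J. periodic_seq n (a j)"
    and V_dim: "\<forall>i. V i \<in> carrier_vec (lift_dim J)"
    and V_nonzero: "\<forall>i. V i \<noteq> 0\<^sub>v (lift_dim J)"
    and M_proj: "M \<in> carrier_mat (lift_dim J) (lift_dim J)" "invertible_mat M"
    and twisted: "twisted_monodromy n V M"
    and corr: "corrugated J (lift_dim J) V"
    and corresponds: "annihilates J a (lift_dim J) V"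
    and generic_ends: "\<forall>i. a (Min J) i \<noteq> 0 \<and> a (Max J) i \<noteq> 0"
    and generic_monodromy: "\<forall>M'. M' \<in> carrier_mat (lift_dim J) (lift_dim J) \<longrightarrow>
            invertible_mat M' \<longrightarrow> twisted_monodromy n V M' \<longrightarrow>
            (\<exists>c. c \<noteq> 0 \<and> M' = c \<cdot>\<^sub>m M)"
  shows "det_DO_poly J a n \<noteq> 0 \<and>
         (\<exists>c::complex. c \<noteq> 0 \<and>
            eigenvalues_mset M = image_mset (\<lambda>z. c * z) (roots_det_DO J a n))"
proof -
  interpret DO_polygon J n a V M
    using J n a_periodic V_dim V_nonzero M_proj twisted corresponds generic_ends generic_monodromy
    by unfold_locales
  obtain k where k: "k \<noteq> 0"
    and ord: "\<And>z. z \<noteq> 0 \<Longrightarrow> order z (det_DO_poly J a n) = order (z / k) (char_poly M_cx)"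
    using order_det_DO_poly by blast
  have D: "det_DO_poly J a n \<noteq> 0" using det_Dz_nonzero by (simp add: det_DO_poly_def)
  have "eigenvalues_mset M = image_mset (\<lambda>z. (1 / k) * z) (roots_det_DO J a n)"
    unfolding eigenvalues_mset_def roots_det_DO_def
    by (rule proots_eq_scaled_nonzero_roots[OF D char_poly_M_cx_nonzero k poly_char_poly_M_cx_0 ord])
  with D k show ?thesis by (intro conjI exI[of _ "1 / k"]) auto
qed

end
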